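(* Let $k$ be an algebraically closed field of characteristic $0$, let $f$ be a nonconstant endomorphism of $\mathbb{P}^n_k$, and let $H\subset\mathbb{P}^n$ be a hypersurface. If every irreducible component of $H$ contains a (nonempty) preperiodic subvariety, then $H$ is dynamically improper under $f$.
   Context: An endomorphism of $\mathbb{P}^n$ is a morphism given by homogeneous forms of a common degree with no common nontrivial zero. A nonempty subvariety $X\subset\mathbb{P}^n$ is preperiodic under $f$ if for every irreducible component $Z$ of $X$ there exist distinct nonnegative integers $s,t$ with $f^s(Z)=f^t(Z)$. A hypersurface $H$ is improper under $f$ if for every irreducible component $Z$ of $H$ there exist integers $0\le i_0<\dots<i_n$ with $f^{i_0}(Z)\cap\dots\cap f^{i_n}(Z)\neq\varnothing$; it is dynamically improper under $f$ if it is improper under $f^r$ for every $r>0$. *)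

theory Defs
  imports Main "HOL-Computational_Algebra.Polynomial" "HOL-Library.Poly_Mapping"
begin

type_synonym 'k mpoly = "(nat \<Rightarrow>\<^sub>0 nat) \<Rightarrow>\<^sub>0 'k"

definition mpeval :: "'k::comm_ring_1 mpoly \<Rightarrow> (nat \<Rightarrow> 'k) \<Rightarrow> 'k" where
  "mpeval p x = (\<Sum>m\<in>Poly_Mapping.keys p. Poly_Mapping.lookup p m * (\<Prod>i\<in>Poly_Mapping.keys m. x i ^ Poly_Mapping.lookup m i))"

definition hpoly :: "nat \<Rightarrow> nat \<Rightarrow> 'k::comm_ring_1 mpoly \<Rightarrow> bool" where
  "hpoly n d p \<longleftrightarrow> (\<forall>m\<in>Poly_Mapping.keys p. Poly_Mapping.keys m \<subseteq> {..n} \<and> (\<Sum>i\<in>Poly_Mapping.keys m. Poly_Mapping.lookup m i) = d)"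

definition nzvec :: "nat \<Rightarrow> (nat \<Rightarrow> 'k::field) \<Rightarrow> bool" where
  "nzvec n x \<longleftrightarrow> (\<forall>i>n. x i = 0) \<and> x \<noteq> (\<lambda>_. 0)"

definition pline :: "(nat \<Rightarrow> 'k::field) \<Rightarrow> (nat \<Rightarrow> 'k) set" where
  "pline x = {(\<lambda>i. c * x i) | c. c \<noteq> 0}"

definition Pn :: "nat \<Rightarrow> (nat \<Rightarrow> 'k::field) set set" where
  "Pn n = pline ` {x. nzvec n x}"

definition zero_locus :: "nat \<Rightarrow> 'k::field mpoly set \<Rightarrow> (nat \<Rightarrow> 'k) set set" where
  "zero_locus n S = {P \<in> Pn n. \<forall>g\<in>S. \<forall>x\<in>P. mpeval g x = 0}"

definition zclosed :: "nat \<Rightarrow> (nat \<Rightarrow> 'k::field) set set \<Rightarrow> bool" where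
  "zclosed n X \<longleftrightarrow> (\<exists>S. (\<forall>g\<in>S. \<exists>d. hpoly n d g) \<and> X = zero_locus n S)"

definition zirreducible :: "nat \<Rightarrow> (nat \<Rightarrow> 'k::field) set set \<Rightarrow> bool" where
  "zirreducible n X \<longleftrightarrow> zclosed n X \<and> X \<noteq> {} \<and>
     (\<forall>A B. zclosed n A \<longrightarrow> zclosed n B \<longrightarrow> X \<subseteq> A \<union> B \<longrightarrow> X \<subseteq> A \<or> X \<subseteq> B)"

definition irr_component :: "nat \<Rightarrow> (nat \<Rightarrow> 'k::field) set set \<Rightarrow> (nat \<Rightarrow> 'k) set set \<Rightarrow> bool" where
  "irr_component n X Z \<longleftrightarrow> Z \<subseteq> X \<and> zirreducible n Z \<and>
     (\<forall>W. zirreducible n W \<longrightarrow> Z \<subseteq> W \<longrightarrow> W \<subseteq> X \<longrightarrow> W = Z)"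

definition subvariety :: "nat \<Rightarrow> (nat \<Rightarrow> 'k::field) set set \<Rightarrow> bool" where
  "subvariety n X \<longleftrightarrow> zclosed n X \<and> X \<noteq> {}"

definition hypersurface :: "nat \<Rightarrow> (nat \<Rightarrow> 'k::field) set set \<Rightarrow> bool" where
  "hypersurface n H \<longleftrightarrow> (\<exists>g d. d > 0 \<and> g \<noteq> 0 \<and> hpoly n d g \<and> H = zero_locus n {g})"

definition endomorphism :: "nat \<Rightarrow> nat \<Rightarrow> (nat \<Rightarrow> 'k::field mpoly) \<Rightarrow> bool" where
  "endomorphism n d F \<longleftrightarrow> (\<forall>i\<le>n. hpoly n d (F i)) \<and>
     (\<forall>x. (\<forall>i>n. x i = 0) \<longrightarrow> (\<forall>i\<le>n. mpeval (F i) x = 0) \<longrightarrow> x = (\<lambda>_. 0))"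

text \<open>The induced map on points of P^n (well defined by homogeneity)\<close>
definition pt_map :: "nat \<Rightarrow> (nat \<Rightarrow> 'k::field mpoly) \<Rightarrow> (nat \<Rightarrow> 'k) set \<Rightarrow> (nat \<Rightarrow> 'k) set" where
  "pt_map n F P = pline (\<lambda>i. if i \<le> n then mpeval (F i) (SOME x. x \<in> P) else 0)"

definition preperiodic :: "nat \<Rightarrow> ((nat \<Rightarrow> 'k::field) set \<Rightarrow> (nat \<Rightarrow> 'k) set) \<Rightarrow> (nat \<Rightarrow> 'k) set set \<Rightarrow> bool" where
  "preperiodic n f X \<longleftrightarrow> subvariety n X \<and>
     (\<forall>Z. irr_component n X Z \<longrightarrow> (\<exists>s t. s \<noteq> t \<and> (f ^^ s) ` Z = (f ^^ t) ` Z))"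

definition improper :: "nat \<Rightarrow> ((nat \<Rightarrow> 'k::field) set \<Rightarrow> (nat \<Rightarrow> 'k) set) \<Rightarrow> (nat \<Rightarrow> 'k) set set \<Rightarrow> bool" where
  "improper n f H \<longleftrightarrow> (\<forall>Z. irr_component n H Z \<longrightarrow>
     (\<exists>i::nat \<Rightarrow> nat. (\<forall>j<n. i j < i (Suc j)) \<and> (\<Inter>j\<le>n. (f ^^ i j) ` Z) \<noteq> {}))"

definition dyn_improper :: "nat \<Rightarrow> ((nat \<Rightarrow> 'k::field) set \<Rightarrow> (nat \<Rightarrow> 'k) set) \<Rightarrow> (nat \<Rightarrow> 'k) set set \<Rightarrow> bool" where
  "dyn_improper n f H \<longleftrightarrow> (\<forall>r>0. improper n (f ^^ r) H)"

end

theory Submission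
  imports Defs
begin

text \<open>Let W be an irreducible component of a preperiodic subvariety X of the component Z,
  so that f^a(W) = f^(a+p)(W) for some a and p > 0. For every r > 0 the set f^(ra)(W) is
  then contained in f^(r(a + jp))(W) \<subseteq> (f^r)^(a + jp)(Z) for all j, so the exponents
  i_j = a + jp witness improperness of H under f^r. Irreducible components of nonempty
  closed sets exist by Zorn's lemma, applied to the irreducible closed subsets containing
  the closure of a point.\<close>

definition zariski_closure :: "nat \<Rightarrow> (nat \<Rightarrow> 'k::field) set set \<Rightarrow> (nat \<Rightarrow> 'k) set set" where
  "zariski_closure n U =
     zero_locus n {g. (\<exists>d. hpoly n d g) \<and> (\<forall>Q\<in>U. \<forall>x\<in>Q. mpeval g x = 0)}"

lemma zclosed_zariski_closure: "zclosed n (zariski_closure n U)"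
  unfolding zclosed_def zariski_closure_def by (rule exI, rule conjI[OF _ refl]) blast

lemma zclosed_subset_Pn: "zclosed n A \<Longrightarrow> A \<subseteq> Pn n"
  unfolding zclosed_def zero_locus_def by blast

lemma zariski_closure_superset: "U \<subseteq> Pn n \<Longrightarrow> U \<subseteq> zariski_closure n U"
  unfolding zariski_closure_def zero_locus_def by blast

lemma zariski_closure_least:
  assumes "zclosed n A" "U \<subseteq> A"
  shows "zariski_closure n U \<subseteq> A"
proof -
  obtain S where S: "\<forall>g\<in>S. \<exists>d. hpoly n d g" "A = zero_locus n S"
    using assms(1) unfolding zclosed_def by blast
  then have "S \<subseteq> {g. (\<exists>d. hpoly n d g) \<and> (\<forall>Q\<in>U. \<forall>x\<in>Q. mpeval g x = 0)}"
    using assms(2) unfolding zero_locus_def by blast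
  then show ?thesis
    unfolding zariski_closure_def S(2) zero_locus_def by blast
qed

lemma zirreducibleD:
  "zirreducible n W \<Longrightarrow> zclosed n A \<Longrightarrow> zclosed n B \<Longrightarrow> W \<subseteq> A \<union> B \<Longrightarrow> W \<subseteq> A \<or> W \<subseteq> B"
  unfolding zirreducible_def by blast

lemma zirreducible_zariski_closure_point:
  assumes "P \<in> Pn n"
  shows "zirreducible n (zariski_closure n {P})"
  unfolding zirreducible_def
proof (intro conjI allI impI)
  have P: "P \<in> zariski_closure n {P}"
    using zariski_closure_superset[of "{P}" n] assms by blast
  then show "zariski_closure n {P} \<noteq> {}" by blast
  fix A B
  assume A: "zclosed n A" and B: "zclosed n B" and "zariski_closure n {P} \<subseteq> A \<union> B"
  with P have "{P} \<subseteq> A \<or> {P} \<subseteq> B" by blast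
  then show "zariski_closure n {P} \<subseteq> A \<or> zariski_closure n {P} \<subseteq> B"
    using zariski_closure_least[OF A] zariski_closure_least[OF B] by blast
qed (rule zclosed_zariski_closure)

lemma zirreducible_zariski_closure_chain:
  assumes "C \<noteq> {}" and chain: "chain\<^sub>\<subseteq> C" and irr: "\<forall>W\<in>C. zirreducible n W"
  shows "zirreducible n (zariski_closure n (\<Union>C))"
  unfolding zirreducible_def
proof (intro conjI allI impI)
  have "W \<subseteq> Pn n" if "W \<in> C" for W
    using irr that zclosed_subset_Pn unfolding zirreducible_def by blast
  then have sup: "\<Union>C \<subseteq> zariski_closure n (\<Union>C)"
    by (intro zariski_closure_superset) blast
  obtain W where "W \<in> C" "W \<noteq> {}"
    using \<open>C \<noteq> {}\<close> irr unfolding zirreducible_def by blast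
  with sup show "zariski_closure n (\<Union>C) \<noteq> {}" by blast
  fix A B
  assume A: "zclosed n A" and B: "zclosed n B" and cover: "zariski_closure n (\<Union>C) \<subseteq> A \<union> B"
  have each: "W \<subseteq> A \<or> W \<subseteq> B" if "W \<in> C" for W
  proof (rule zirreducibleD[OF _ A B])
    show "zirreducible n W" using irr that by blast
    show "W \<subseteq> A \<union> B" using that sup cover by blast
  qed
  \<comment> \<open>If some member of the chain is not inside A, every member lies inside B.\<close>
  have "\<Union>C \<subseteq> A \<or> \<Union>C \<subseteq> B"
  proof (cases "\<forall>W\<in>C. W \<subseteq> A")
    case False
    then obtain W0 where W0: "W0 \<in> C" "\<not> W0 \<subseteq> A" by blast
    with each have "W0 \<subseteq> B" by blast
    have "W \<subseteq> B" if "W \<in> C" for W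
    proof -
      have "W \<subseteq> W0 \<or> W0 \<subseteq> W" using chain W0(1) that unfolding chain_subset_def by blast
      then show ?thesis using each[OF that] W0(2) \<open>W0 \<subseteq> B\<close> by blast
    qed
    then show ?thesis by blast
  qed blast
  then show "zariski_closure n (\<Union>C) \<subseteq> A \<or> zariski_closure n (\<Union>C) \<subseteq> B"
    using zariski_closure_least[OF A, of "\<Union>C"] zariski_closure_least[OF B, of "\<Union>C"] by blast
qed (rule zclosed_zariski_closure)

lemma irr_component_exists:
  assumes X: "zclosed n X" and "X \<noteq> {}"
  obtains W where "irr_component n X W"
proof -
  obtain P where "P \<in> X" using \<open>X \<noteq> {}\<close> by blast
  with zclosed_subset_Pn[OF X] have P: "P \<in> Pn n" by blast
  define W0 where "W0 = zariski_closure n {P}"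
  define A where "A = {W. zirreducible n W \<and> W0 \<subseteq> W \<and> W \<subseteq> X}"
  have W0A: "W0 \<in> A"
    unfolding A_def W0_def
    using zirreducible_zariski_closure_point[OF P] zariski_closure_least[OF X] \<open>P \<in> X\<close>
    by blast
  have "\<exists>U\<in>A. \<forall>Y\<in>C. Y \<subseteq> U" if "C \<in> chains A" for C
  proof (cases "C = {}")
    case True
    with W0A show ?thesis by blast
  next
    case False
    have CA: "C \<subseteq> A" and chain: "chain\<^sub>\<subseteq> C"
      using that unfolding chains_def by simp_all
    let ?U = "zariski_closure n (\<Union>C)"
    have CX: "\<Union>C \<subseteq> X" using CA unfolding A_def by blast
    have sup: "\<Union>C \<subseteq> ?U"
      using CX zclosed_subset_Pn[OF X] by (intro zariski_closure_superset) blast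
    obtain Y0 where "Y0 \<in> C" using False by blast
    then have "W0 \<subseteq> ?U" using CA sup unfolding A_def by blast
    moreover have "zirreducible n ?U"
      using zirreducible_zariski_closure_chain[OF False chain] CA unfolding A_def by blast
    moreover have "?U \<subseteq> X" using zariski_closure_least[OF X CX] .
    ultimately have "?U \<in> A" unfolding A_def by blast
    with sup show ?thesis by blast
  qed
  then obtain M where M: "M \<in> A" "\<forall>Y\<in>A. M \<subseteq> Y \<longrightarrow> Y = M"
    using Zorn_Lemma2[of A] by blast
  then have "irr_component n X M"
    unfolding irr_component_def A_def by blast
  then show thesis by (rule that)
qed

lemma funpow_image_add:
  fixes f :: "'a \<Rightarrow> 'a"
  shows "(f ^^ (a + b)) ` W = (f ^^ a) ` (f ^^ b) ` W"
  by (simp add: funpow_add image_comp)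

lemma funpow_image_periodic:
  fixes f :: "'a \<Rightarrow> 'a"
  assumes "(f ^^ (a + p)) ` W = (f ^^ a) ` W"
  shows "(f ^^ (a + m + k * p)) ` W = (f ^^ (a + m)) ` W"
proof (induction k)
  case (Suc k)
  have "(f ^^ (a + m + Suc k * p)) ` W = (f ^^ (m + k * p)) ` (f ^^ (a + p)) ` W"
    by (metis funpow_image_add add.commute add.left_commute mult_Suc)
  also have "\<dots> = (f ^^ (a + m + k * p)) ` W"
    by (metis assms funpow_image_add add.commute add.left_commute)
  finally show ?case using Suc by simp
qed simp

lemma funpow_image_eq_imp_periodic:
  fixes f :: "'a \<Rightarrow> 'a"
  assumes "s \<noteq> t" "(f ^^ s) ` W = (f ^^ t) ` W"
  obtains a p where "p > 0" "(f ^^ (a + p)) ` W = (f ^^ a) ` W"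
proof (cases "s < t")
  case True
  with assms show thesis using that[of "t - s" s] by simp
next
  case False
  with assms show thesis using that[of "s - t" t] by simp
qed

lemma funpow_image_eq_imp_common_point:
  fixes f :: "'a \<Rightarrow> 'a"
  assumes "W \<noteq> {}" "s \<noteq> t" "(f ^^ s) ` W = (f ^^ t) ` W" "r > 0"
  obtains i :: "nat \<Rightarrow> nat" where "strict_mono i" "(\<Inter>j\<in>J. ((f ^^ r) ^^ i j) ` W) \<noteq> {}"
proof -
  obtain a p where p: "p > 0" and per: "(f ^^ (a + p)) ` W = (f ^^ a) ` W"
    using funpow_image_eq_imp_periodic[OF assms(2,3)] .
  define i where "i j = a + j * p" for j
  have "strict_mono i"
    unfolding i_def strict_mono_def using p by simp
  have "((f ^^ r) ^^ i j) ` W = (f ^^ (r * a)) ` W" for j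
  proof -
    have "r * i j = a + (r * a - a) + (r * j) * p" and "r * a = a + (r * a - a)"
      using \<open>r > 0\<close> unfolding i_def by (simp_all add: algebra_simps)
    then show ?thesis
      using funpow_image_periodic[OF per, of "r * a - a" "r * j"] by (simp add: funpow_mult)
  qed
  with \<open>W \<noteq> {}\<close> have "(\<Inter>j\<in>J. ((f ^^ r) ^^ i j) ` W) \<noteq> {}"
    by (cases "J = {}") auto
  with \<open>strict_mono i\<close> show thesis by (rule that)
qed

theorem mainTheorem7:
  fixes n d :: nat
    and F :: "nat \<Rightarrow> 'k::{alg_closed_field, field_char_0} mpoly"
    and H :: "(nat \<Rightarrow> 'k) set set"
  assumes "endomorphism n d F"
    and "d \<ge> 1"
    and "hypersurface n H"
    and "\<forall>Z. irr_component n H Z \<longrightarrow>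
           (\<exists>X. X \<subseteq> Z \<and> preperiodic n (pt_map n F) X)"
  shows "dyn_improper n (pt_map n F) H"
  unfolding dyn_improper_def improper_def
proof (intro allI impI)
  fix r :: nat and Z
  assume "r > 0" and "irr_component n H Z"
  then obtain X where "X \<subseteq> Z" and pre: "preperiodic n (pt_map n F) X"
    using assms(4) by blast
  have "zclosed n X" "X \<noteq> {}"
    using pre unfolding preperiodic_def subvariety_def by simp_all
  then obtain W where W: "irr_component n X W"
    by (rule irr_component_exists)
  then have "W \<subseteq> Z" "W \<noteq> {}"
    using \<open>X \<subseteq> Z\<close> unfolding irr_component_def zirreducible_def by auto
  obtain s t where "s \<noteq> t" "(pt_map n F ^^ s) ` W = (pt_map n F ^^ t) ` W"
    using pre W unfolding preperiodic_def by blast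
  from funpow_image_eq_imp_common_point[OF \<open>W \<noteq> {}\<close> this \<open>r > 0\<close>, of "{..n}"]
  obtain i :: "nat \<Rightarrow> nat" where "strict_mono i"
    and "(\<Inter>j\<le>n. ((pt_map n F ^^ r) ^^ i j) ` W) \<noteq> {}" .
  moreover have "(\<Inter>j\<le>n. ((pt_map n F ^^ r) ^^ i j) ` W) \<subseteq> (\<Inter>j\<le>n. ((pt_map n F ^^ r) ^^ i j) ` Z)"
    using \<open>W \<subseteq> Z\<close> by (intro INF_mono) (auto intro: image_mono)
  ultimately show "\<exists>i::nat \<Rightarrow> nat. (\<forall>j<n. i j < i (Suc j)) \<and>
      (\<Inter>j\<le>n. ((pt_map n F ^^ r) ^^ i j) ` Z) \<noteq> {}"
    by (metis strict_mono_Suc_iff subset_empty)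
qed

end
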